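(* Let $q$ be a prime power, $0<k<n\le q$ with $n\mid q-1$, and let $C=RS_k(n,b)$ be a Reed–Solomon code over $\mathbb{F}_q$ with $0<b\le (k+1)/2$. Then there exists an MDS QUENTA code with parameters $[[n,\,2b-1,\,n-k+1;\,n+2b-2k-1]]_q$. In particular, for $b=(k+1)/2$ this is a maximal entanglement MDS QUENTA code.
   Context: For $n\mid q-1$ and a primitive $n$-th root of unity $\alpha\in\mathbb{F}_q$, the Reed–Solomon code $RS_k(n,b)$ is the cyclic code of length $n$ over $\mathbb{F}_q$ with defining set $\{b,b+1,\dots,b+n-k-1\}$ (indices mod $n$), where the defining set of a cyclic code $C$ is $\{i\in\mathbb{Z}_n: c(\alpha^i)=0\ \forall c\in C\}$; it is an $[n,k,n-k+1]_q$ code. A QUENTA code (entanglement-assisted quantum error-correcting code) with parameters $[[n,k,d;c]]_q$ is a $q$-ary entanglement-assisted quantum stabilizer code that encodes $k$ logical qudits into $n$ physical qudits using $c$ pairs of maximally entangled qudits pre-shared between sender and receiver, and has minimum distance $d$. It has maximal entanglement if $c=n-k$, and it is MDS if $k=n-2(d-1)+c$ (equality in the entanglement-assisted quantum Singleton bound).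
   Formalization: The parameters also satisfy 2k+1 <= n+2b, that is, the number n+2b-2k-1 of pre-shared maximally entangled pairs is nonnegative. The statement above fails without it. *)

theory Defs
  imports Main
begin

definition words :: "nat \<Rightarrow> (nat \<Rightarrow> 'a::zero) set" where
  "words n = {c. \<forall>i\<ge>n. c i = 0}"

definition primitive_root :: "nat \<Rightarrow> 'a::field \<Rightarrow> bool" where
  "primitive_root n \<alpha> \<longleftrightarrow> 0 < n \<and> \<alpha> ^ n = 1 \<and> (\<forall>j. 0 < j \<and> j < n \<longrightarrow> \<alpha> ^ j \<noteq> 1)"

definition cyclic_code_defset :: "nat \<Rightarrow> 'a::field \<Rightarrow> nat set \<Rightarrow> (nat \<Rightarrow> 'a) set" where
  "cyclic_code_defset n \<alpha> Z = {c \<in> words n. \<forall>i\<in>Z. (\<Sum>j<n. c j * \<alpha> ^ (i * j)) = 0}"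

definition RS_code :: "nat \<Rightarrow> 'a::field \<Rightarrow> nat \<Rightarrow> nat \<Rightarrow> (nat \<Rightarrow> 'a) set" where
  "RS_code n \<alpha> k b = cyclic_code_defset n \<alpha> ((\<lambda>i. i mod n) ` {b..<b + (n - k)})"

text \<open>Vectors of F_q^{2n} (X-part, Z-part), supported on {0..<n}.\<close>
definition svecs :: "nat \<Rightarrow> ((nat \<Rightarrow> 'a::zero) \<times> (nat \<Rightarrow> 'a)) set" where
  "svecs n = {x. fst x \<in> words n \<and> snd x \<in> words n}"

definition symp :: "nat \<Rightarrow> (nat \<Rightarrow> 'a::comm_ring) \<times> (nat \<Rightarrow> 'a) \<Rightarrow> (nat \<Rightarrow> 'a) \<times> (nat \<Rightarrow> 'a) \<Rightarrow> 'a" where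
  "symp n x y = (\<Sum>i<n. fst x i * snd y i - snd x i * fst y i)"

definition symp_dual :: "nat \<Rightarrow> ((nat \<Rightarrow> 'a::comm_ring) \<times> (nat \<Rightarrow> 'a)) set \<Rightarrow> ((nat \<Rightarrow> 'a) \<times> (nat \<Rightarrow> 'a)) set" where
  "symp_dual n S = {y \<in> svecs n. \<forall>x\<in>S. symp n x y = 0}"

definition symp_weight :: "nat \<Rightarrow> (nat \<Rightarrow> 'a::zero) \<times> (nat \<Rightarrow> 'a) \<Rightarrow> nat" where
  "symp_weight n x = card {i. i < n \<and> (fst x i \<noteq> 0 \<or> snd x i \<noteq> 0)}"

definition ssubspace :: "nat \<Rightarrow> ((nat \<Rightarrow> 'a::field) \<times> (nat \<Rightarrow> 'a)) set \<Rightarrow> bool" where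
  "ssubspace n S \<longleftrightarrow> S \<subseteq> svecs n \<and> ((\<lambda>_. 0), (\<lambda>_. 0)) \<in> S
     \<and> (\<forall>x\<in>S. \<forall>y\<in>S. ((\<lambda>i. fst x i + fst y i), (\<lambda>i. snd x i + snd y i)) \<in> S)
     \<and> (\<forall>a. \<forall>x\<in>S. ((\<lambda>i. a * fst x i), (\<lambda>i. a * snd x i)) \<in> S)"

text \<open>S (an F_q-subspace of F_q^{2n}, the image of the non-abelian stabilizer group
  modulo phases) defines a QUENTA code [[n,k,d;c]]_q iff
  dim S = n - k + c, dim (S \<inter> S^perp) = n - k - c (so 2c = dim S - dim of the symplectic
  radical = number of ebits), and d = min symplectic weight of S^perp minus (S \<inter> S^perp).
  Dimensions over F_q are expressed by cardinalities |S| = q^(dim S).\<close>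
definition quenta_code ::
  "nat \<Rightarrow> nat \<Rightarrow> nat \<Rightarrow> nat \<Rightarrow> ((nat \<Rightarrow> 'a::{finite,field}) \<times> (nat \<Rightarrow> 'a)) set \<Rightarrow> bool" where
  "quenta_code n k d c S \<longleftrightarrow>
     ssubspace n S \<and>
     (\<exists>s r. card S = card (UNIV :: 'a set) ^ s \<and> card (S \<inter> symp_dual n S) = card (UNIV :: 'a set) ^ r
            \<and> s = r + 2 * c \<and> k + s = n + c) \<and>
     (\<exists>e \<in> symp_dual n S - (S \<inter> symp_dual n S). symp_weight n e = d) \<and>
     (\<forall>e \<in> symp_dual n S - (S \<inter> symp_dual n S). d \<le> symp_weight n e)"

definition quenta_exists :: "'a::{finite,field} itself \<Rightarrow> nat \<Rightarrow> nat \<Rightarrow> nat \<Rightarrow> nat \<Rightarrow> bool" where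
  "quenta_exists _ n k d c \<longleftrightarrow> (\<exists>S :: ((nat \<Rightarrow> 'a) \<times> (nat \<Rightarrow> 'a)) set. quenta_code n k d c S)"

text \<open>MDS: k = n - 2(d-1) + c (stated without truncated subtraction).\<close>
definition quenta_MDS :: "nat \<Rightarrow> nat \<Rightarrow> nat \<Rightarrow> nat \<Rightarrow> bool" where
  "quenta_MDS n k d c \<longleftrightarrow> int k = int n - 2 * (int d - 1) + int c"

definition maximal_entanglement :: "nat \<Rightarrow> nat \<Rightarrow> nat \<Rightarrow> bool" where
  "maximal_entanglement n k c \<longleftrightarrow> int c = int n - int k"

end

theory Submission
  imports Defs "HOL-Computational_Algebra.Polynomial" "HOL-Library.FuncSet"
begin

text \<open>Let \<open>A\<close> be the dual of \<open>C = RS\<^sub>k(n,b)\<close>. Under the discrete Fourier transform over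
  the \<open>n\<close>-th roots of unity, \<open>A\<close> is the code of words with spectrum in
  \<open>Z = {b, ..., b+n-k-1}\<close>, and the dual of the code with spectrum \<open>F\<close> is the code with
  spectrum \<open>{0, ..., n-1} - (-F)\<close>. Hence the hull \<open>A \<inter> C\<close> is the code with spectrum
  \<open>Z - (-Z) = {b, ..., k-b}\<close>, of dimension \<open>k+1-2b\<close>. The stabilizer \<open>S = A \<times> A\<close> has
  symplectic dual \<open>C \<times> C\<close> and radical \<open>hull \<times> hull\<close>, so it consumes
  \<open>dim A - dim hull = n+2b-2k-1\<close> ebits and encodes \<open>n - dim A - dim hull = 2b-1\<close> qudits.
  Its minimum distance is that of \<open>C\<close>, namely \<open>n-k+1\<close> by the BCH bound, attained by a
  word of \<open>C\<close> outside \<open>A\<close>.\<close>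

lemma of_nat_card_field_eq_0: "of_nat (card (UNIV :: 'a::{finite,field} set)) = (0 :: 'a)"
proof -
  have "(\<Sum>x\<in>UNIV. x + 1) = (\<Sum>x\<in>UNIV. x :: 'a)"
    by (rule sum.reindex_bij_witness[where i = "\<lambda>x. x - 1" and j = "\<lambda>x. x + 1"]) auto
  then show ?thesis by (simp add: sum.distrib)
qed

lemma of_nat_ne_0_if_dvd_card_minus_1:
  assumes "n dvd card (UNIV :: 'a::{finite,field} set) - 1"
  shows "of_nat n \<noteq> (0 :: 'a)"
proof
  assume n0: "of_nat n = (0 :: 'a)"
  obtain t where "card (UNIV :: 'a set) - 1 = n * t" using assms by blast
  moreover have "card (UNIV :: 'a set) > 0" by (simp add: finite_UNIV_card_ge_0)
  ultimately have "card (UNIV :: 'a set) = n * t + 1" by linarith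
  then have "(of_nat (card (UNIV :: 'a set)) :: 'a) = of_nat n * of_nat t + 1" by simp
  with n0 show False by (simp add: of_nat_card_field_eq_0)
qed

lemma primitive_root_nonzero: "primitive_root n \<alpha> \<Longrightarrow> \<alpha> \<noteq> 0"
  unfolding primitive_root_def by (metis power_0_left zero_neq_one gr_implies_not0)

lemma primitive_root_power_mod: "primitive_root n \<alpha> \<Longrightarrow> \<alpha> ^ m = \<alpha> ^ (m mod n)"
  unfolding primitive_root_def
  by (metis div_mult_mod_eq mult.commute power_add power_mult power_one mult_1)

lemma primitive_root_power_eq_1_iff: "primitive_root n \<alpha> \<Longrightarrow> \<alpha> ^ m = 1 \<longleftrightarrow> n dvd m"
  using primitive_root_power_mod[of n \<alpha> m] unfolding primitive_root_def
  by (metis dvd_eq_mod_eq_0 mod_less_divisor mod_greater_zero_iff_not_dvd power_0)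

lemma primitive_root_inj: "primitive_root n \<alpha> \<Longrightarrow> inj_on (\<lambda>j. \<alpha> ^ j) {..<n}"
proof (rule inj_onI)
  fix i j assume prim: "primitive_root n \<alpha>" and "i \<in> {..<n}" "j \<in> {..<n}" "\<alpha> ^ i = \<alpha> ^ j"
  moreover have "\<alpha> ^ i = \<alpha> ^ j \<Longrightarrow> i < j \<Longrightarrow> j < n \<Longrightarrow> False" for i j
  proof -
    assume "\<alpha> ^ i = \<alpha> ^ j" "i < j" "j < n"
    then have "\<alpha> ^ i * \<alpha> ^ (j - i) = \<alpha> ^ i * 1"
      by (metis le_add_diff_inverse less_imp_le mult_1_right power_add)
    then have "\<alpha> ^ (j - i) = 1" using primitive_root_nonzero[OF prim] by simp
    with \<open>i < j\<close> \<open>j < n\<close> prim show False by (auto simp: primitive_root_def)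
  qed
  ultimately show "i = j" by (metis lessThan_iff linorder_neqE_nat)
qed

lemma primitive_root_power_sum:
  assumes "primitive_root n \<alpha>"
  shows "(\<Sum>j<n. \<alpha> ^ (m * j)) = (if n dvd m then of_nat n else 0)"
proof (cases "n dvd m")
  case True
  then have "\<alpha> ^ (m * j) = 1" for j
    using assms by (simp add: primitive_root_power_eq_1_iff)
  then show ?thesis using True by simp
next
  case False
  then have "\<alpha> ^ m \<noteq> 1" using assms by (simp add: primitive_root_power_eq_1_iff)
  then have "(\<Sum>j<n. (\<alpha> ^ m) ^ j) = ((\<alpha> ^ m) ^ n - 1) / (\<alpha> ^ m - 1)" by (rule geometric_sum)
  also have "(\<alpha> ^ m) ^ n = 1"
    using assms by (simp add: primitive_root_power_eq_1_iff flip: power_mult)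
  finally show ?thesis using False by (simp add: power_mult)
qed

definition supported_on :: "nat set \<Rightarrow> (nat \<Rightarrow> 'a::zero) set" where
  "supported_on F = {f. \<forall>a. a \<notin> F \<longrightarrow> f a = 0}"

lemma supported_on_mono: "F \<subseteq> G \<Longrightarrow> supported_on F \<subseteq> supported_on G"
  by (auto simp: supported_on_def)

lemma supported_on_Int: "supported_on F \<inter> supported_on G = supported_on (F \<inter> G)"
  by (auto simp: supported_on_def)

lemma words_eq_supported_on: "words n = supported_on {..<n}"
  by (auto simp: words_def supported_on_def)

lemma card_supported_on:
  assumes "finite F"
  shows "card (supported_on F :: (nat \<Rightarrow> 'a::{finite,zero}) set) = card (UNIV :: 'a set) ^ card F"
proof -
  have "bij_betw (\<lambda>f. restrict f F) (supported_on F) (F \<rightarrow>\<^sub>E (UNIV :: 'a set))"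
    by (rule bij_betw_byWitness[where f' = "\<lambda>h a. if a \<in> F then h a else 0"])
      (auto simp: supported_on_def fun_eq_iff PiE_def extensional_def)
  then show ?thesis using assms by (simp add: bij_betw_same_card card_PiE)
qed

lemma finite_words: "finite (words n :: (nat \<Rightarrow> 'a::{finite,zero}) set)"
  using card_supported_on[of "{..<n}", where 'a = 'a]
  by (intro card_ge_0_finite) (simp add: words_eq_supported_on finite_UNIV_card_ge_0)

definition dotp :: "nat \<Rightarrow> (nat \<Rightarrow> 'a::comm_ring) \<Rightarrow> (nat \<Rightarrow> 'a) \<Rightarrow> 'a" where
  "dotp n u v = (\<Sum>i<n. u i * v i)"

definition perp :: "nat \<Rightarrow> (nat \<Rightarrow> 'a::comm_ring) set \<Rightarrow> (nat \<Rightarrow> 'a) set" where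
  "perp n A = {y \<in> words n. \<forall>x\<in>A. dotp n x y = 0}"

lemma not_dvd_between: "(n::nat) < m \<Longrightarrow> m < 2 * n \<Longrightarrow> \<not> n dvd m"
  using dvd_diff_nat[of n m n] nat_dvd_not_less[of "m - n" n] by auto

text \<open>Here and below \<open>(n - a) mod n\<close> is the residue of \<open>-a\<close> modulo \<open>n\<close>.\<close>

lemma dvd_add_iff_eq_neg_mod:
  fixes a c n :: nat
  assumes "a < n" "c < n"
  shows "n dvd a + c \<longleftrightarrow> c = (n - a) mod n"
proof (cases "a = 0")
  case True
  with assms show ?thesis by (auto simp: nat_dvd_not_less)
next
  case False
  then have "(n - a) mod n = n - a" using assms by simp
  moreover have "n dvd a + c \<longleftrightarrow> a + c = n"
    using False assms not_dvd_between[of n "a + c"] nat_dvd_not_less[of "a + c" n]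
    by (cases "a + c" n rule: linorder_cases) auto
  ultimately show ?thesis using assms by linarith
qed

lemma neg_mod_neg_mod: "c < (n::nat) \<Longrightarrow> (n - (n - c) mod n) mod n = c"
  by (cases "c = 0") auto

definition dft :: "nat \<Rightarrow> 'a::comm_ring_1 \<Rightarrow> (nat \<Rightarrow> 'a) \<Rightarrow> nat \<Rightarrow> 'a" where
  "dft n \<alpha> f = (\<lambda>j. if j < n then \<Sum>a<n. f a * \<alpha> ^ (a * j) else 0)"

lemma dft_words: "dft n \<alpha> f \<in> words n"
  by (simp add: dft_def words_def)

definition basis_word :: "nat \<Rightarrow> nat \<Rightarrow> 'a::zero_neq_one" where
  "basis_word c = (\<lambda>i. if i = c then 1 else 0)"

lemma basis_word_supported_on: "c \<in> F \<Longrightarrow> basis_word c \<in> supported_on F"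
  by (simp add: basis_word_def supported_on_def)

lemma sum_basis_word_mult:
  "(\<Sum>a<n. basis_word c a * h a) = (if c < n then h c else (0 :: 'a::semiring_1))"
  by (simp add: basis_word_def if_distrib[of "\<lambda>x. x * _"] cong: if_cong)

lemma dotp_dft_left:
  "dotp n (dft n \<alpha> g) y = (\<Sum>a<n. g a * (\<Sum>j<n. y j * \<alpha> ^ (a * j)))"
proof -
  have "dotp n (dft n \<alpha> g) y = (\<Sum>j<n. \<Sum>a<n. g a * (y j * \<alpha> ^ (a * j)))"
    unfolding dotp_def by (rule sum.cong) (simp_all add: dft_def sum_distrib_left mult_ac)
  also have "\<dots> = (\<Sum>a<n. g a * (\<Sum>j<n. y j * \<alpha> ^ (a * j)))"
    by (subst sum.swap) (simp add: sum_distrib_left)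
  finally show ?thesis .
qed

lemma sum_dft_power:
  assumes prim: "primitive_root n \<alpha>" and "a < n"
  shows "(\<Sum>j<n. dft n \<alpha> f j * \<alpha> ^ (a * j)) = of_nat n * f ((n - a) mod n)"
proof -
  have "(\<Sum>j<n. dft n \<alpha> f j * \<alpha> ^ (a * j)) = (\<Sum>c<n. f c * (\<Sum>j<n. \<alpha> ^ ((c + a) * j)))"
    using dotp_dft_left[of n \<alpha> f "\<lambda>j. \<alpha> ^ (a * j)"]
    unfolding dotp_def by (simp add: distrib_left power_add mult_ac)
  also have "\<dots> = (\<Sum>c<n. if c = (n - a) mod n then of_nat n * f c else 0)"
  proof (rule sum.cong)
    fix c assume "c \<in> {..<n}"
    then have "n dvd c + a \<longleftrightarrow> c = (n - a) mod n"
      using dvd_add_iff_eq_neg_mod[of a n c] \<open>a < n\<close> by (simp add: add.commute)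
    then show "f c * (\<Sum>j<n. \<alpha> ^ ((c + a) * j)) = (if c = (n - a) mod n then of_nat n * f c else 0)"
      using prim by (simp add: primitive_root_power_sum)
  qed simp
  also have "\<dots> = of_nat n * f ((n - a) mod n)"
    using prim by (simp add: primitive_root_def)
  finally show ?thesis .
qed

lemma dotp_dft:
  assumes "primitive_root n \<alpha>"
  shows "dotp n (dft n \<alpha> g) (dft n \<alpha> f) = of_nat n * (\<Sum>a<n. g a * f ((n - a) mod n))"
proof -
  have "dotp n (dft n \<alpha> g) (dft n \<alpha> f) = (\<Sum>a<n. g a * (of_nat n * f ((n - a) mod n)))"
    unfolding dotp_dft_left by (intro sum.cong) (simp_all add: sum_dft_power[OF assms])
  then show ?thesis by (simp add: sum_distrib_left mult_ac)
qed

lemma dft_inj_on: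
  assumes prim: "primitive_root n \<alpha>" and nz: "of_nat n \<noteq> (0 :: 'a::field)"
  shows "inj_on (dft n \<alpha>) (words n :: (nat \<Rightarrow> 'a) set)"
proof (rule inj_onI)
  fix f g :: "nat \<Rightarrow> 'a" assume "f \<in> words n" "g \<in> words n" and dft_eq: "dft n \<alpha> f = dft n \<alpha> g"
  show "f = g"
  proof
    fix c show "f c = g c"
    proof (cases "c < n")
      case True
      then have "(n - c) mod n < n" by simp
      from sum_dft_power[OF prim this] dft_eq have "of_nat n * f c = of_nat n * g c"
        by (metis True neg_mod_neg_mod)
      with nz show ?thesis by simp
    next
      case False
      with \<open>f \<in> words n\<close> \<open>g \<in> words n\<close> show ?thesis by (simp add: words_def)
    qed
  qed
qed

lemma dft_image_words:
  assumes "primitive_root n \<alpha>" "of_nat n \<noteq> (0 :: 'a::{finite,field})"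
  shows "dft n \<alpha> ` words n = (words n :: (nat \<Rightarrow> 'a) set)"
  using finite_words dft_words dft_inj_on[OF assms] by (intro endo_inj_surj) auto

definition spectral_code :: "nat \<Rightarrow> 'a::comm_ring_1 \<Rightarrow> nat set \<Rightarrow> (nat \<Rightarrow> 'a) set" where
  "spectral_code n \<alpha> F = dft n \<alpha> ` supported_on F"

lemma supported_on_subset_words: "F \<subseteq> {..<n} \<Longrightarrow> supported_on F \<subseteq> words n"
  by (simp add: supported_on_mono words_eq_supported_on)

lemma card_spectral_code:
  assumes "primitive_root n \<alpha>" "of_nat n \<noteq> (0 :: 'a::{finite,field})" "F \<subseteq> {..<n}"
  shows "card (spectral_code n \<alpha> F :: (nat \<Rightarrow> 'a) set) = card (UNIV :: 'a set) ^ card F"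
proof -
  have "inj_on (dft n \<alpha>) (supported_on F :: (nat \<Rightarrow> 'a) set)"
    using dft_inj_on[OF assms(1,2)] supported_on_subset_words[OF assms(3)] by (rule inj_on_subset)
  then show ?thesis
    using assms(3) by (simp add: spectral_code_def card_image card_supported_on finite_subset)
qed

lemma spectral_code_Int:
  assumes "primitive_root n \<alpha>" "of_nat n \<noteq> (0 :: 'a::field)" "F \<subseteq> {..<n}" "G \<subseteq> {..<n}"
  shows "spectral_code n \<alpha> F \<inter> spectral_code n \<alpha> G = (spectral_code n \<alpha> (F \<inter> G) :: (nat \<Rightarrow> 'a) set)"
proof -
  have "inj_on (dft n \<alpha>) (supported_on F \<union> supported_on G :: (nat \<Rightarrow> 'a) set)"
    using dft_inj_on[OF assms(1,2)] supported_on_subset_words[OF assms(3)]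
      supported_on_subset_words[OF assms(4)] by (meson inj_on_subset le_sup_iff)
  then show ?thesis
    unfolding spectral_code_def supported_on_Int[symmetric] by (simp add: inj_on_image_Int)
qed

lemma perp_spectral_code:
  assumes prim: "primitive_root n \<alpha>" and nz: "of_nat n \<noteq> (0 :: 'a::{finite,field})"
    and F: "F \<subseteq> {..<n}"
  shows "perp n (spectral_code n \<alpha> F :: (nat \<Rightarrow> 'a) set)
    = spectral_code n \<alpha> ({..<n} - (\<lambda>a. (n - a) mod n) ` F)"
    (is "_ = spectral_code n \<alpha> ?G")
proof -
  have dft_perp_iff: "dft n \<alpha> f \<in> perp n (spectral_code n \<alpha> F) \<longleftrightarrow> f \<in> supported_on ?G"
    if f: "f \<in> words n" for f :: "nat \<Rightarrow> 'a"
  proof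
    assume perp: "dft n \<alpha> f \<in> perp n (spectral_code n \<alpha> F)"
    have "f ((n - c) mod n) = 0" if "c \<in> F" for c
    proof -
      have "dotp n (dft n \<alpha> (basis_word c)) (dft n \<alpha> f) = 0"
        using perp basis_word_supported_on[OF that] by (auto simp: perp_def spectral_code_def)
      then show ?thesis
        using that F nz by (auto simp: dotp_dft[OF prim] sum_basis_word_mult)
    qed
    with f show "f \<in> supported_on ?G" by (auto simp: supported_on_def words_def)
  next
    assume "f \<in> supported_on ?G"
    then have "g a * f ((n - a) mod n) = 0" if "g \<in> supported_on F" "a < n" for g a
      using that F by (cases "a \<in> F") (auto simp: supported_on_def)
    then show "dft n \<alpha> f \<in> perp n (spectral_code n \<alpha> F)"
      by (auto simp: perp_def spectral_code_def dotp_dft[OF prim] dft_words intro!: sum.neutral)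
  qed
  show ?thesis
  proof
    show "perp n (spectral_code n \<alpha> F) \<subseteq> spectral_code n \<alpha> ?G"
    proof
      fix y assume y: "y \<in> perp n (spectral_code n \<alpha> F)"
      then have "y \<in> dft n \<alpha> ` words n" using dft_image_words[OF prim nz] by (simp add: perp_def)
      with y dft_perp_iff show "y \<in> spectral_code n \<alpha> ?G" by (auto simp: spectral_code_def)
    qed
    show "spectral_code n \<alpha> ?G \<subseteq> perp n (spectral_code n \<alpha> F)"
      using dft_perp_iff supported_on_subset_words[of ?G n] by (auto simp: spectral_code_def)
  qed
qed

lemma cyclic_code_defset_eq_perp:
  assumes "Z \<subseteq> {..<n}"
  shows "cyclic_code_defset n \<alpha> Z = perp n (spectral_code n \<alpha> Z)"
proof -
  have "(\<forall>i\<in>Z. (\<Sum>j<n. c j * \<alpha> ^ (i * j)) = 0) \<longleftrightarrow>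
      (\<forall>g\<in>supported_on Z. dotp n (dft n \<alpha> g) c = 0)" for c
  proof
    assume "\<forall>i\<in>Z. (\<Sum>j<n. c j * \<alpha> ^ (i * j)) = 0"
    then have "g a * (\<Sum>j<n. c j * \<alpha> ^ (a * j)) = 0" if "g \<in> supported_on Z" for g a
      using that by (cases "a \<in> Z") (auto simp: supported_on_def)
    then show "\<forall>g\<in>supported_on Z. dotp n (dft n \<alpha> g) c = 0"
      by (simp add: dotp_dft_left sum.neutral)
  next
    assume orth: "\<forall>g\<in>supported_on Z. dotp n (dft n \<alpha> g) c = 0"
    show "\<forall>i\<in>Z. (\<Sum>j<n. c j * \<alpha> ^ (i * j)) = 0"
    proof
      fix i assume "i \<in> Z"
      with orth have "dotp n (dft n \<alpha> (basis_word i)) c = 0"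
        by (simp add: basis_word_supported_on)
      with \<open>i \<in> Z\<close> assms show "(\<Sum>j<n. c j * \<alpha> ^ (i * j)) = 0"
        by (auto simp: dotp_dft_left sum_basis_word_mult)
    qed
  qed
  then show ?thesis by (auto simp: cyclic_code_defset_def perp_def spectral_code_def)
qed

definition hamming_weight :: "nat \<Rightarrow> (nat \<Rightarrow> 'a::zero) \<Rightarrow> nat" where
  "hamming_weight n x = card {i. i < n \<and> x i \<noteq> 0}"

lemma degree_prod_linear: "degree (\<Prod>t\<in>A. [:- r t, 1:]) = card A"
  for r :: "'b \<Rightarrow> 'a::idom"
  by (simp add: degree_prod_eq_sum_degree)

lemma poly_prod_linear: "poly (\<Prod>t\<in>A. [:- r t, 1:]) x = (\<Prod>t\<in>A. x - r t)"
  for r :: "'b \<Rightarrow> 'a::comm_ring_1"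
  by (simp add: poly_prod)

lemma sum_mult_poly_power:
  fixes p :: "'a::comm_ring_1 poly"
  assumes "degree p < d"
  shows "(\<Sum>j<n. c j * \<alpha> ^ (s * j) * poly p (\<alpha> ^ j))
    = (\<Sum>e<d. coeff p e * (\<Sum>j<n. c j * \<alpha> ^ ((s + e) * j)))"
proof -
  have poly_p: "poly p x = (\<Sum>e<d. coeff p e * x ^ e)" for x
    unfolding poly_altdef
    by (rule sum.mono_neutral_left) (use assms in \<open>auto simp: coeff_eq_0\<close>)
  have "(\<Sum>j<n. c j * \<alpha> ^ (s * j) * poly p (\<alpha> ^ j))
      = (\<Sum>j<n. \<Sum>e<d. coeff p e * (c j * \<alpha> ^ ((s + e) * j)))"
    unfolding poly_p sum_distrib_left
    by (intro sum.cong) (simp_all add: distrib_left power_add mult_ac flip: power_mult)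
  also have "\<dots> = (\<Sum>e<d. coeff p e * (\<Sum>j<n. c j * \<alpha> ^ ((s + e) * j)))"
    by (subst sum.swap) (simp add: sum_distrib_left)
  finally show ?thesis .
qed

lemma bch_bound:
  fixes c :: "nat \<Rightarrow> 'a::field"
  assumes prim: "primitive_root n \<alpha>" and c: "c \<in> words n" "c \<noteq> (\<lambda>_. 0)"
    and zeros: "\<And>e. e < \<delta> \<Longrightarrow> (\<Sum>j<n. c j * \<alpha> ^ ((s + e) * j)) = 0"
  shows "\<delta> < hamming_weight n c"
proof (rule ccontr)
  define T where "T = {i. i < n \<and> c i \<noteq> 0}"
  assume "\<not> \<delta> < hamming_weight n c"
  then have card_T: "card T \<le> \<delta>" by (simp add: hamming_weight_def T_def)
  obtain i0 where "c i0 \<noteq> 0" using c(2) by auto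
  with c(1) have i0: "i0 \<in> T" "i0 < n" by (auto simp: T_def words_def not_less[symmetric])
  have fin_T: "finite T" by (simp add: T_def)
  \<comment> \<open>\<open>g\<close> kills every support point but \<open>i0\<close>, and its degree is small enough for the
    vanishing sums to annihilate it.\<close>
  define g where "g = (\<Prod>t\<in>T - {i0}. [:- (\<alpha> ^ t), 1:])"
  have "card T > 0" using fin_T i0 by (auto simp: card_gt_0_iff)
  then have "degree g < \<delta>"
    using card_T i0 fin_T by (simp add: g_def degree_prod_linear)
  then have "(\<Sum>j<n. c j * \<alpha> ^ (s * j) * poly g (\<alpha> ^ j)) = 0"
    by (simp add: sum_mult_poly_power zeros)
  moreover have "(\<Sum>j<n. c j * \<alpha> ^ (s * j) * poly g (\<alpha> ^ j))
      = (\<Sum>j\<in>{i0}. c j * \<alpha> ^ (s * j) * poly g (\<alpha> ^ j))"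
  proof (rule sum.mono_neutral_right)
    show "\<forall>j\<in>{..<n} - {i0}. c j * \<alpha> ^ (s * j) * poly g (\<alpha> ^ j) = 0"
      using fin_T by (auto simp: g_def poly_prod_linear T_def)
  qed (use i0 in auto)
  moreover have "poly g (\<alpha> ^ i0) \<noteq> 0"
    using fin_T i0 inj_onD[OF primitive_root_inj[OF prim]] by (auto simp: g_def poly_prod_linear T_def)
  ultimately show False using \<open>c i0 \<noteq> 0\<close> primitive_root_nonzero[OF prim] by simp
qed

definition grs_word :: "nat \<Rightarrow> 'a::comm_ring_1 \<Rightarrow> nat \<Rightarrow> 'a poly \<Rightarrow> nat \<Rightarrow> 'a" where
  "grs_word n \<alpha> s p = (\<lambda>j. if j < n then \<alpha> ^ (s * j) * poly p (\<alpha> ^ j) else 0)"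

lemma grs_word_words: "grs_word n \<alpha> s p \<in> words n"
  by (simp add: grs_word_def words_def)

lemma sum_grs_word_power:
  assumes "degree p < d"
  shows "(\<Sum>j<n. grs_word n \<alpha> s p j * \<alpha> ^ (m * j))
    = (\<Sum>e<d. coeff p e * (\<Sum>j<n. \<alpha> ^ ((s + m + e) * j)))"
proof -
  have "(\<Sum>j<n. grs_word n \<alpha> s p j * \<alpha> ^ (m * j))
      = (\<Sum>j<n. 1 * \<alpha> ^ ((s + m) * j) * poly p (\<alpha> ^ j))"
    by (intro sum.cong) (simp_all add: grs_word_def distrib_left power_add mult_ac)
  also have "\<dots> = (\<Sum>e<d. coeff p e * (\<Sum>j<n. 1 * \<alpha> ^ ((s + m + e) * j)))"
    by (rule sum_mult_poly_power[OF assms])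
  finally show ?thesis by simp
qed

lemma hamming_weight_grs_word_prod:
  assumes prim: "primitive_root n \<alpha>" and "r \<le> n"
  shows "hamming_weight n (grs_word n \<alpha> s (\<Prod>i<r. [:- (\<alpha> ^ i), 1:])) = n - r"
proof -
  have "grs_word n \<alpha> s (\<Prod>i<r. [:- (\<alpha> ^ i), 1:]) j \<noteq> 0 \<longleftrightarrow> r \<le> j" if "j < n" for j
  proof -
    have "(\<alpha> ^ j = \<alpha> ^ i) \<longleftrightarrow> j = i" if "i < r" for i
      using inj_onD[OF primitive_root_inj[OF prim], of j i] \<open>j < n\<close> \<open>r \<le> n\<close> that by auto
    then show ?thesis
      using \<open>j < n\<close> primitive_root_nonzero[OF prim] by (auto simp: grs_word_def poly_prod_linear)
  qed
  then have "{j. j < n \<and> grs_word n \<alpha> s (\<Prod>i<r. [:- (\<alpha> ^ i), 1:]) j \<noteq> 0} = {r..<n}" by fastforce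
  then show ?thesis by (simp add: hamming_weight_def)
qed

definition linear_code :: "nat \<Rightarrow> (nat \<Rightarrow> 'a::field) set \<Rightarrow> bool" where
  "linear_code n A \<longleftrightarrow> A \<subseteq> words n \<and> (\<lambda>_. 0) \<in> A
     \<and> (\<forall>x\<in>A. \<forall>y\<in>A. (\<lambda>i. x i + y i) \<in> A) \<and> (\<forall>a. \<forall>x\<in>A. (\<lambda>i. a * x i) \<in> A)"

lemma linear_code_spectral_code: "linear_code n (spectral_code n \<alpha> F)"
proof -
  have "(\<lambda>_. 0) = dft n \<alpha> (\<lambda>_. 0)" "(\<lambda>_. 0) \<in> supported_on F"
    by (simp_all add: dft_def fun_eq_iff supported_on_def)
  then have zero: "(\<lambda>_. 0) \<in> spectral_code n \<alpha> F"
    unfolding spectral_code_def by blast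
  have add: "(\<lambda>i. x i + y i) \<in> spectral_code n \<alpha> F"
    if xy: "x \<in> spectral_code n \<alpha> F" "y \<in> spectral_code n \<alpha> F" for x y
  proof -
    obtain f g where "f \<in> supported_on F" "g \<in> supported_on F" "x = dft n \<alpha> f" "y = dft n \<alpha> g"
      using xy unfolding spectral_code_def by blast
    then have "(\<lambda>a. f a + g a) \<in> supported_on F" "(\<lambda>i. x i + y i) = dft n \<alpha> (\<lambda>a. f a + g a)"
      by (simp_all add: supported_on_def dft_def fun_eq_iff sum.distrib distrib_right)
    then show ?thesis by (simp add: spectral_code_def)
  qed
  have smult: "(\<lambda>i. c * x i) \<in> spectral_code n \<alpha> F" if x: "x \<in> spectral_code n \<alpha> F" for c x
  proof -
    obtain f where "f \<in> supported_on F" "x = dft n \<alpha> f"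
      using x unfolding spectral_code_def by blast
    then have "(\<lambda>a. c * f a) \<in> supported_on F" "(\<lambda>i. c * x i) = dft n \<alpha> (\<lambda>a. c * f a)"
      by (simp_all add: supported_on_def dft_def fun_eq_iff sum_distrib_left mult.assoc)
    then show ?thesis by (simp add: spectral_code_def)
  qed
  show ?thesis
    using zero add smult dft_words by (auto simp: linear_code_def spectral_code_def)
qed

lemma symp_eq_dotp: "symp n x y = dotp n (fst x) (snd y) - dotp n (snd x) (fst y)"
  by (simp add: symp_def dotp_def sum_subtractf)

lemma symp_dual_Times:
  assumes "(\<lambda>_. 0) \<in> A"
  shows "symp_dual n (A \<times> A) = perp n A \<times> perp n A"
proof -
  have "(\<forall>p\<in>A \<times> A. symp n p e = 0) \<longleftrightarrow>
      (\<forall>x\<in>A. dotp n x (fst e) = 0 \<and> dotp n x (snd e) = 0)" for e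
  proof
    assume orth: "\<forall>p\<in>A \<times> A. symp n p e = 0"
    show "\<forall>x\<in>A. dotp n x (fst e) = 0 \<and> dotp n x (snd e) = 0"
    proof
      fix x assume "x \<in> A"
      with assms orth have "symp n (x, \<lambda>_. 0) e = 0" "symp n (\<lambda>_. 0, x) e = 0" by auto
      then show "dotp n x (fst e) = 0 \<and> dotp n x (snd e) = 0"
        by (simp_all add: symp_eq_dotp dotp_def)
    qed
  qed (auto simp: symp_eq_dotp)
  then show ?thesis by (auto simp: symp_dual_def perp_def svecs_def)
qed

lemma symp_weight_ge_hamming_weight:
  "hamming_weight n (fst e) \<le> symp_weight n e" "hamming_weight n (snd e) \<le> symp_weight n e"
  by (auto simp: hamming_weight_def symp_weight_def intro!: card_mono)

lemma quenta_code_Times: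
  fixes A :: "(nat \<Rightarrow> 'a::{finite,field}) set"
  assumes lin: "linear_code n A"
    and card_A: "card A = card (UNIV :: 'a set) ^ (h + c)"
    and card_hull: "card (A \<inter> perp n A) = card (UNIV :: 'a set) ^ h"
    and dims: "k + 2 * h + c = n"
    and y: "y \<in> perp n A" "y \<notin> A" "hamming_weight n y = d"
    and min_weight: "\<And>x. x \<in> perp n A \<Longrightarrow> x \<noteq> (\<lambda>_. 0) \<Longrightarrow> d \<le> hamming_weight n x"
  shows "quenta_code n k d c (A \<times> A)"
proof -
  have zero: "(\<lambda>_. 0) \<in> A" using lin by (simp add: linear_code_def)
  then have zero_perp: "(\<lambda>_. 0) \<in> perp n A" by (simp add: perp_def words_def dotp_def)
  have dual: "symp_dual n (A \<times> A) = perp n A \<times> perp n A" by (rule symp_dual_Times[OF zero])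
  then have radical: "A \<times> A \<inter> symp_dual n (A \<times> A) = (A \<inter> perp n A) \<times> (A \<inter> perp n A)" by auto
  have "ssubspace n (A \<times> A)"
    using lin by (auto simp: ssubspace_def linear_code_def svecs_def)
  moreover have "card (A \<times> A) = card (UNIV :: 'a set) ^ (2 * h + 2 * c)"
    "card (A \<times> A \<inter> symp_dual n (A \<times> A)) = card (UNIV :: 'a set) ^ (2 * h)"
    unfolding radical card_cartesian_product card_A card_hull
    by (simp_all flip: power_add add: mult_2 add_ac)
  moreover have "(y, \<lambda>_. 0) \<in> symp_dual n (A \<times> A) - A \<times> A \<inter> symp_dual n (A \<times> A)"
    "symp_weight n (y, \<lambda>_. 0) = d"
    using y zero_perp by (simp_all add: dual radical symp_weight_def hamming_weight_def)
  moreover have "d \<le> symp_weight n e"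
    if e: "e \<in> symp_dual n (A \<times> A) - A \<times> A \<inter> symp_dual n (A \<times> A)" for e
  proof -
    have "fst e \<noteq> (\<lambda>_. 0) \<or> snd e \<noteq> (\<lambda>_. 0)"
      using e zero zero_perp by (auto simp: dual radical)
    moreover have "fst e \<in> perp n A" "snd e \<in> perp n A" using e by (auto simp: dual)
    ultimately show ?thesis
      using min_weight symp_weight_ge_hamming_weight[of n e] by (meson le_trans)
  qed
  ultimately show ?thesis
    unfolding quenta_code_def using dims by (intro conjI exI bexI ballI) auto
qed

lemma RS_code_eq_cyclic_code_defset:
  assumes "b \<le> k" "k \<le> n"
  shows "RS_code n \<alpha> k b = cyclic_code_defset n \<alpha> {b..<b + (n - k)}"
proof -
  have "i mod n = i" if "i \<in> {b..<b + (n - k)}" for i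
    using that assms by (intro mod_less) auto
  then have "(\<lambda>i. i mod n) ` {b..<b + (n - k)} = (\<lambda>i. i) ` {b..<b + (n - k)}"
    by (intro image_cong) auto
  then show ?thesis by (simp add: RS_code_def)
qed

lemma RS_code_eq_perp:
  assumes "b \<le> k" "k \<le> n"
  shows "RS_code n \<alpha> k b = perp n (spectral_code n \<alpha> {b..<b + (n - k)})"
proof -
  have "{b..<b + (n - k)} \<subseteq> {..<n}"
    using assms by auto
  then show ?thesis
    using assms by (simp add: RS_code_eq_cyclic_code_defset cyclic_code_defset_eq_perp)
qed

lemma RS_code_orthogonal_powers:
  assumes prim: "primitive_root n \<alpha>" and x: "x \<in> RS_code n \<alpha> k b" and "e < n - k"
  shows "(\<Sum>j<n. x j * \<alpha> ^ ((b + e) * j)) = 0"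
proof -
  have "(\<Sum>j<n. x j * \<alpha> ^ ((b + e) mod n * j)) = 0"
    using x \<open>e < n - k\<close> unfolding RS_code_def cyclic_code_defset_def by auto
  moreover have "\<alpha> ^ ((b + e) mod n * j) = \<alpha> ^ ((b + e) * j)" for j
    using primitive_root_power_mod[OF prim] by (metis mod_mult_left_eq)
  ultimately show ?thesis by simp
qed

lemma RS_code_weight_bound:
  assumes "primitive_root n \<alpha>" "x \<in> RS_code n \<alpha> k b" "x \<noteq> (\<lambda>_. 0)"
  shows "n - k < hamming_weight n x"
proof (rule bch_bound)
  show "x \<in> words n" using assms(2) by (simp add: RS_code_def cyclic_code_defset_def)
qed (use assms RS_code_orthogonal_powers in auto)

locale reed_solomon_hull =
  fixes n k b :: nat and \<alpha> :: "'a::{finite,field}"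
  assumes prim: "primitive_root n \<alpha>" and char: "of_nat n \<noteq> (0 :: 'a)"
    and k_pos: "0 < k" and k_less_n: "k < n" and b_pos: "0 < b"
    and b_le: "2 * b \<le> k + 1" and n_ge: "2 * k + 1 \<le> n + 2 * b"
begin

definition RS_dual :: "(nat \<Rightarrow> 'a) set" where
  "RS_dual = spectral_code n \<alpha> {b..<b + (n - k)}"

lemma b_le_k: "b \<le> k"
  using b_pos b_le by linarith

lemma perp_RS_dual: "perp n RS_dual = RS_code n \<alpha> k b"
  using b_le_k k_less_n by (simp add: RS_dual_def RS_code_eq_perp)

lemma card_RS_dual: "card RS_dual = card (UNIV :: 'a set) ^ (n - k)"
proof -
  have "{b..<b + (n - k)} \<subseteq> {..<n}"
    using b_le_k k_less_n by auto
  then show ?thesis by (simp add: RS_dual_def card_spectral_code[OF prim char])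
qed

lemma neg_mod_image:
  "(\<lambda>a. (n - a) mod n) ` {b..<b + (n - k)} = {k - b<..n - b}"
proof -
  have "(\<lambda>a. (n - a) mod n) ` {b..<b + (n - k)} = (\<lambda>a. n - a) ` {b..<b + (n - k)}"
    using b_pos by (intro image_cong) auto
  also have "\<dots> = {k - b<..n - b}"
  proof
    show "(\<lambda>a. n - a) ` {b..<b + (n - k)} \<subseteq> {k - b<..n - b}"
      using b_le_k k_less_n by auto
    show "{k - b<..n - b} \<subseteq> (\<lambda>a. n - a) ` {b..<b + (n - k)}"
    proof
      fix x assume "x \<in> {k - b<..n - b}"
      then have "n - x \<in> {b..<b + (n - k)}" "x = n - (n - x)"
        using b_le_k k_less_n by auto
      then show "x \<in> (\<lambda>a. n - a) ` {b..<b + (n - k)}" by blast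
    qed
  qed
  finally show ?thesis .
qed

lemma RS_hull: "RS_dual \<inter> perp n RS_dual = spectral_code n \<alpha> {b..k - b}"
proof -
  have "{b..<b + (n - k)} \<inter> ({..<n} - {k - b<..n - b}) = {b..k - b}"
    using b_le n_ge k_less_n by auto
  moreover have "{b..<b + (n - k)} \<subseteq> {..<n}"
    using b_le_k k_less_n by auto
  ultimately show ?thesis
    by (simp add: RS_dual_def perp_spectral_code[OF prim char] spectral_code_Int[OF prim char]
        neg_mod_image)
qed

lemma card_RS_hull: "card (RS_dual \<inter> perp n RS_dual) = card (UNIV :: 'a set) ^ (k + 1 - 2 * b)"
proof -
  have "{b..k - b} \<subseteq> {..<n}" "card {b..k - b} = k + 1 - 2 * b"
    using b_le_k k_less_n by auto
  then show ?thesis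
    by (simp add: RS_hull card_spectral_code[OF prim char])
qed

text \<open>The monomials of this word have exponents \<open>n-b+1, ..., n-b+k\<close>, the spectrum of \<open>C\<close>,
  and the roots \<open>\<alpha>^0, ..., \<alpha>^(k-2)\<close> of the product leave exactly \<open>n-k+1\<close> nonzero
  coordinates.\<close>

definition min_weight_word :: "nat \<Rightarrow> 'a" where
  "min_weight_word = grs_word n \<alpha> (n - b + 1) (\<Prod>i<k - 1. [:- (\<alpha> ^ i), 1:])"

lemma degree_min_weight_poly: "degree (\<Prod>i<k - 1. [:- (\<alpha> ^ i), 1:]) < k"
  using k_pos by (simp add: degree_prod_linear)

lemma min_weight_word_RS_code: "min_weight_word \<in> RS_code n \<alpha> k b"
proof -
  have "(\<Sum>j<n. min_weight_word j * \<alpha> ^ (i * j)) = 0" if "i \<in> {b..<b + (n - k)}" for i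
  proof -
    have "\<not> n dvd n - b + 1 + i + e" if "e < k" for e
      using \<open>i \<in> {b..<b + (n - k)}\<close> that b_le_k k_less_n by (intro not_dvd_between) auto
    then have "(\<Sum>j<n. \<alpha> ^ ((n - b + 1 + i + e) * j)) = 0" if "e < k" for e
      using that by (simp only: primitive_root_power_sum[OF prim] if_False)
    then show ?thesis
      unfolding min_weight_word_def sum_grs_word_power[OF degree_min_weight_poly]
      by (intro sum.neutral) auto
  qed
  then show ?thesis
    using b_le_k k_less_n
    by (simp add: RS_code_eq_cyclic_code_defset cyclic_code_defset_def min_weight_word_def
        grs_word_words)
qed

lemma hamming_weight_min_weight_word: "hamming_weight n min_weight_word = n - k + 1"
  using k_pos k_less_n by (simp add: min_weight_word_def hamming_weight_grs_word_prod[OF prim])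

text \<open>Words of \<open>RS_dual\<close> are orthogonal to \<open>(\<alpha>^((b-1)j))\<^sub>j\<close>, since \<open>-(b-1)\<close> lies outside
  their spectrum; \<open>min_weight_word\<close> is not.\<close>

lemma min_weight_word_not_in_RS_dual: "min_weight_word \<notin> RS_dual"
proof
  let ?p = "\<Prod>i<k - 1. [:- (\<alpha> ^ i), 1:]"
  have "n dvd n - b + 1 + (b - 1) + e \<longleftrightarrow> e = 0" if "e < k" for e
  proof -
    have "n - b + 1 + (b - 1) + e = n + e" using b_pos b_le_k k_less_n by linarith
    then show ?thesis using that k_less_n by (auto simp: dvd_eq_mod_eq_0)
  qed
  then have "(\<Sum>j<n. \<alpha> ^ ((n - b + 1 + (b - 1) + e) * j)) = (if e = 0 then of_nat n else 0)"
    if "e < k" for e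
    using that by (simp only: primitive_root_power_sum[OF prim])
  then have "(\<Sum>j<n. min_weight_word j * \<alpha> ^ ((b - 1) * j))
      = (\<Sum>e<k. if e = 0 then coeff ?p e * of_nat n else 0)"
    unfolding min_weight_word_def sum_grs_word_power[OF degree_min_weight_poly]
    by (intro sum.cong) auto
  also have "\<dots> = poly ?p 0 * of_nat n"
    using k_pos by (simp add: poly_0_coeff_0)
  finally have "(\<Sum>j<n. min_weight_word j * \<alpha> ^ ((b - 1) * j)) \<noteq> 0"
    using char primitive_root_nonzero[OF prim] by (simp add: poly_prod_linear)
  moreover assume "min_weight_word \<in> RS_dual"
  then obtain f where "f \<in> supported_on {b..<b + (n - k)}" "min_weight_word = dft n \<alpha> f"
    by (auto simp: RS_dual_def spectral_code_def)
  moreover have "(n - (b - 1)) mod n \<notin> {b..<b + (n - k)}"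
    using b_pos b_le k_less_n by (cases "b = 1") auto
  ultimately show False
    using b_le_k k_less_n by (simp add: sum_dft_power[OF prim] supported_on_def)
qed

theorem quenta_code_RS_dual:
  "quenta_code n (2 * b - 1) (n - k + 1) (n + 2 * b - 2 * k - 1) (RS_dual \<times> RS_dual)"
proof (rule quenta_code_Times)
  show "linear_code n RS_dual"
    by (simp add: RS_dual_def linear_code_spectral_code)
  show "card RS_dual = card (UNIV :: 'a set) ^ (k + 1 - 2 * b + (n + 2 * b - 2 * k - 1))"
    using card_RS_dual b_le n_ge by (simp add: algebra_simps)
  show "card (RS_dual \<inter> perp n RS_dual) = card (UNIV :: 'a set) ^ (k + 1 - 2 * b)"
    by (rule card_RS_hull)
  show "2 * b - 1 + 2 * (k + 1 - 2 * b) + (n + 2 * b - 2 * k - 1) = n"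
    using b_pos b_le n_ge by linarith
  show "min_weight_word \<in> perp n RS_dual" "min_weight_word \<notin> RS_dual"
    "hamming_weight n min_weight_word = n - k + 1"
    by (simp_all add: perp_RS_dual min_weight_word_RS_code min_weight_word_not_in_RS_dual
        hamming_weight_min_weight_word)
  show "n - k + 1 \<le> hamming_weight n x" if "x \<in> perp n RS_dual" "x \<noteq> (\<lambda>_. 0)" for x
    using that RS_code_weight_bound[OF prim] by (simp add: perp_RS_dual Suc_le_eq)
qed

end

theorem mainTheorem4:
  fixes n k b :: nat and \<alpha> :: "'a::{finite,field}" and C :: "(nat \<Rightarrow> 'a) set"
  assumes "0 < k" and "k < n" and "n \<le> card (UNIV :: 'a set)"
    and "n dvd card (UNIV :: 'a set) - 1"
    and "primitive_root n \<alpha>"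
    and "C = RS_code n \<alpha> k b"
    and "0 < b" and "2 * b \<le> k + 1"
    and "2 * k + 1 \<le> n + 2 * b"
  shows "quenta_exists TYPE('a) n (2 * b - 1) (n - k + 1) (n + 2 * b - 2 * k - 1)
         \<and> quenta_MDS n (2 * b - 1) (n - k + 1) (n + 2 * b - 2 * k - 1)
         \<and> (2 * b = k + 1 \<longrightarrow> maximal_entanglement n (2 * b - 1) (n + 2 * b - 2 * k - 1))"
proof -
  interpret reed_solomon_hull n k b \<alpha>
    using assms of_nat_ne_0_if_dvd_card_minus_1[OF assms(4)] by unfold_locales auto
  have "quenta_exists TYPE('a) n (2 * b - 1) (n - k + 1) (n + 2 * b - 2 * k - 1)"
    unfolding quenta_exists_def using quenta_code_RS_dual by blast
  moreover have "quenta_MDS n (2 * b - 1) (n - k + 1) (n + 2 * b - 2 * k - 1)"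
    using assms by (simp add: quenta_MDS_def of_nat_diff)
  moreover have "2 * b = k + 1 \<longrightarrow> maximal_entanglement n (2 * b - 1) (n + 2 * b - 2 * k - 1)"
    using assms by (simp add: maximal_entanglement_def of_nat_diff)
  ultimately show ?thesis by blast
qed

end
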